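(* Let $\mathcal G=\mathfrak g_1\oplus\mathfrak g_2$ and let $f\in C^p_{\mathsf{LTS}}(\mathcal G,\mathcal G)$, $g\in C^q_{\mathsf{LTS}}(\mathcal G,\mathcal G)$ be homogeneous with bidegrees $\|f\|=l_f|k_f$ and $\|g\|=l_g|k_g$. Then $\|[f,g]_{\mathsf{LTS}}\|=(l_f+l_g)|(k_f+k_g)$.
   Context: All vector spaces are over a field of characteristic $0$. Cochains: $C^p(\mathcal G,\mathcal G)=\mathrm{Hom}(\otimes^{2p+1}\mathcal G,\mathcal G)$, arguments $(\mathfrak X_1,\dots,\mathfrak X_p,x)$, $\mathfrak X_i=x_i\otimes y_i$; for $P\in C^p,Q\in C^q$, $(P\circ Q)(\mathfrak X_1,\dots,\mathfrak X_{p+q},x)=\sum_{k=1}^p(-1)^{(k-1)q}\sum_{\sigma\in\mathbb S(k-1,q)}(-1)^\sigma P(\mathfrak X_{\sigma(1)},\dots,\mathfrak X_{\sigma(k-1)},Q(\mathfrak X_{\sigma(k)},\dots,\mathfrak X_{\sigma(k+q-1)},x_{k+q})\otimes y_{k+q},\mathfrak X_{k+q+1},\dots,x)+\sum_{k=1}^p(-1)^{(k-1)q}\sum_{\sigma\in\mathbb S(k-1,q)}(-1)^\sigma P(\mathfrak X_{\sigma(1)},\dots,\mathfrak X_{\sigma(k-1)},x_{k+q}\otimes Q(\mathfrak X_{\sigma(k)},\dots,\mathfrak X_{\sigma(k+q-1)},y_{k+q}),\mathfrak X_{k+q+1},\dots,x)+\sum_{\sigma\in\mathbb S(p,q)}(-1)^\sigma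 P(\mathfrak X_{\sigma(1)},\dots,\mathfrak X_{\sigma(p)},Q(\mathfrak X_{\sigma(p+1)},\dots,\mathfrak X_{\sigma(p+q)},x))$ ($\mathbb S$ = shuffles), $[P,Q]=P\circ Q-(-1)^{pq}Q\circ P$; $C^p_{\mathsf{LTS}}$ is the subspace of $P$ with $P(\dots,x,x,y)=0$ and vanishing cyclic sum in the last three slots, with restricted bracket $[\cdot,\cdot]_{\mathsf{LTS}}$. Bidegree: $\mathfrak g^{a,b}\subset\otimes^{a+b}\mathcal G$ is the sum of all tensor products with exactly $a$ factors $\mathfrak g_1$ and $b$ factors $\mathfrak g_2$; $f\in C^p_{\mathsf{LTS}}$ has bidegree $l|k$ ($l+k=2p$) if $f(\mathfrak g^{l+1,k})\subset\mathfrak g_1$, $f(\mathfrak g^{l,k+1})\subset\mathfrak g_2$, and $f$ vanishes on all other $\mathfrak g^{a,b}$; homogeneous means having a bidegree. *)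

theory Defs
  imports Complex_Main "HOL-Combinatorics.Permutations"
begin

text \<open>Cochains in C^p(G,G) = Hom(tensor^(2p+1) G, G) are represented as functions
  'v list => 'v, meaningful on lists of length 2p+1, multilinear in every slot.
  The argument (X_1,...,X_p,x) with X_i = x_i (x) y_i is the list [x_1,y_1,...,x_p,y_p,x].\<close>

definition is_cochain :: "('k::field \<Rightarrow> 'v::ab_group_add \<Rightarrow> 'v) \<Rightarrow> nat \<Rightarrow> ('v list \<Rightarrow> 'v) \<Rightarrow> bool" where
  "is_cochain scale p f \<longleftrightarrow>
     (\<forall>xs i. length xs = 2*p+1 \<and> i < length xs \<longrightarrow>
        Vector_Spaces.linear scale scale (\<lambda>v. f (xs[i := v])))"

definition is_LTS_cochain :: "('k::field \<Rightarrow> 'v::ab_group_add \<Rightarrow> 'v) \<Rightarrow> nat \<Rightarrow> ('v list \<Rightarrow> 'v) \<Rightarrow> bool" where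
  "is_LTS_cochain scale p f \<longleftrightarrow> is_cochain scale p f \<and>
     (1 \<le> p \<longrightarrow> (\<forall>pre a b c. length pre = 2*p - 2 \<longrightarrow>
        f (pre @ [a, a, b]) = 0 \<and>
        f (pre @ [a, b, c]) + f (pre @ [b, c, a]) + f (pre @ [c, a, b]) = 0))"

definition shuffles :: "nat \<Rightarrow> nat \<Rightarrow> (nat \<Rightarrow> nat) set" where
  "shuffles r s = {\<sigma>. \<sigma> permutes {..<r+s} \<and>
      (\<forall>i j. i < j \<and> j < r \<longrightarrow> \<sigma> i < \<sigma> j) \<and>
      (\<forall>i j. r \<le> i \<and> i < j \<and> j < r+s \<longrightarrow> \<sigma> i < \<sigma> j)}"

definition negpow :: "nat \<Rightarrow> 'v::ab_group_add \<Rightarrow> 'v" where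
  "negpow n v = (if even n then v else - v)"

definition psign :: "(nat \<Rightarrow> nat) \<Rightarrow> 'v::ab_group_add \<Rightarrow> 'v" where
  "psign \<sigma> v = (if evenperm \<sigma> then v else - v)"

text \<open>The composition P o Q for P in C^p, Q in C^q, evaluated on a list of length 2(p+q)+1.
  The index m below is k-1 of the paper.\<close>
definition cochain_comp :: "nat \<Rightarrow> nat \<Rightarrow> ('v::ab_group_add list \<Rightarrow> 'v) \<Rightarrow> ('v list \<Rightarrow> 'v) \<Rightarrow> 'v list \<Rightarrow> 'v" where
  "cochain_comp p q P Q xs =
    (let n = p + q;
         X = (\<lambda>j. [xs ! (2*j), xs ! (2*j+1)]);
         x = xs ! (2*n)
     in (\<Sum>m<p. negpow (m*q) (\<Sum>\<sigma>\<in>shuffles m q. psign \<sigma>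
            (P (concat (map (X \<circ> \<sigma>) [0..<m])
                @ [Q (concat (map (X \<circ> \<sigma>) [m..<m+q]) @ [xs ! (2*(m+q))]), xs ! (2*(m+q)+1)]
                @ concat (map X [m+q+1..<n]) @ [x]))))
      + (\<Sum>m<p. negpow (m*q) (\<Sum>\<sigma>\<in>shuffles m q. psign \<sigma>
            (P (concat (map (X \<circ> \<sigma>) [0..<m])
                @ [xs ! (2*(m+q)), Q (concat (map (X \<circ> \<sigma>) [m..<m+q]) @ [xs ! (2*(m+q)+1)])]
                @ concat (map X [m+q+1..<n]) @ [x]))))
      + (\<Sum>\<sigma>\<in>shuffles p q. psign \<sigma>
            (P (concat (map (X \<circ> \<sigma>) [0..<p]) @ [Q (concat (map (X \<circ> \<sigma>) [p..<n]) @ [x])]))))"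

text \<open>[P,Q] = P o Q - (-1)^(pq) Q o P (for LTS cochains this is [.,.]_LTS).\<close>
definition cochain_bracket :: "nat \<Rightarrow> nat \<Rightarrow> ('v::ab_group_add list \<Rightarrow> 'v) \<Rightarrow> ('v list \<Rightarrow> 'v) \<Rightarrow> 'v list \<Rightarrow> 'v" where
  "cochain_bracket p q P Q = (\<lambda>xs. cochain_comp p q P Q xs - negpow (p*q) (cochain_comp q p Q P xs))"

text \<open>By multilinearity it suffices (and is equivalent) to test on pure tensors of homogeneous elements;
  t i says that slot i is taken from g1 (otherwise from g2).\<close>
definition has_bidegree :: "'v::ab_group_add set \<Rightarrow> 'v set \<Rightarrow> nat \<Rightarrow> ('v list \<Rightarrow> 'v) \<Rightarrow> int \<Rightarrow> int \<Rightarrow> bool" where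
  "has_bidegree g1 g2 p f l k \<longleftrightarrow> l + k = 2 * int p \<and>
     (\<forall>xs t. length xs = 2*p+1 \<and> (\<forall>i<length xs. xs ! i \<in> (if t i then g1 else g2)) \<longrightarrow>
        (let a = int (card {i. i < 2*p+1 \<and> t i}) in
           (a = l + 1 \<longrightarrow> f xs \<in> g1) \<and>
           (a = l \<longrightarrow> f xs \<in> g2) \<and>
           (a \<noteq> l + 1 \<and> a \<noteq> l \<longrightarrow> f xs = 0)))"

end

theory Submission imports Defs begin

(* Give the vectors of g1 weight 1, those of g2 weight 0, and let 0 have every other
   integer weight as well. A cochain of bidegree l|k then sends arguments of total weight a
   to a value of weight a - l; by multilinearity this holds for arbitrary integer slot
   weights, since a slot of weight outside {0, 1} is 0. In this form weights add up under
   insertion: f(.., g(B), ..) has weight a - l_g - l_f for every placement of g, and each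
   term of f o g and g o f is such an insertion with the slots merely permuted. *)

definition weight_space :: "'v::ab_group_add set \<Rightarrow> 'v set \<Rightarrow> int \<Rightarrow> 'v set" where
  "weight_space g1 g2 d = (if d = 1 then g1 else if d = 0 then g2 else {0})"

definition pair_slots :: "(nat \<Rightarrow> nat) \<Rightarrow> nat list \<Rightarrow> nat list" where
  "pair_slots \<sigma> js = concat (map (\<lambda>j. [2 * \<sigma> j, 2 * \<sigma> j + 1]) js)"

lemma concat_map_pairs_eq_map_nth:
  "concat (map ((\<lambda>j. [xs ! (2*j), xs ! (2*j+1)]) \<circ> \<sigma>) js)
     = map (nth xs) (pair_slots \<sigma> js)"
  by (induct js) (auto simp: pair_slots_def)

lemma length_pair_slots [simp]: "length (pair_slots \<sigma> js) = 2 * length js"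
  by (induct js) (auto simp: pair_slots_def)

lemma pair_slots_append: "pair_slots \<sigma> (js @ ks) = pair_slots \<sigma> js @ pair_slots \<sigma> ks"
  by (simp add: pair_slots_def)

lemma pair_slots_id_upt: "pair_slots id [a..<b] = [2*a..<2*b]"
proof (induct b)
  case (Suc b)
  then show ?case
    by (cases "a \<le> b") (auto simp: pair_slots_append pair_slots_def upt_conv_Cons)
qed (simp add: pair_slots_def)

lemma mset_concat_map: "mset (concat (map F xs)) = (\<Sum>x\<in>#mset xs. mset (F x))"
  by (induct xs) auto

lemma pair_slots_map: "pair_slots \<sigma> js = pair_slots id (map \<sigma> js)"
  by (simp add: pair_slots_def comp_def)

lemma mset_pair_slots_permutes:
  assumes "\<sigma> permutes {..<K}"
  shows "mset (pair_slots \<sigma> [0..<K]) = mset [0..<2*K]"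
proof -
  have "image_mset \<sigma> (mset [0..<K]) = mset [0..<K]"
    using permutes_image_mset[OF assms] by (simp only: mset_upt lessThan_atLeast0)
  then have "mset (map \<sigma> [0..<K]) = mset [0..<K]"
    by simp
  then have "mset (pair_slots id (map \<sigma> [0..<K])) = mset (pair_slots id [0..<K])"
    unfolding pair_slots_def mset_concat_map by (simp only:)
  then show ?thesis
    by (simp only: pair_slots_map[symmetric] pair_slots_id_upt mult_0_right)
qed

lemma sum_list_map_eq_if_mset_eq:
  fixes w :: "'a \<Rightarrow> 'b::comm_monoid_add"
  shows "mset xs = mset ys \<Longrightarrow> sum_list (map w xs) = sum_list (map w ys)"
  by (metis mset_map sum_mset_sum_list)

lemma cochain_eq_0_if_slot_eq_0:
  assumes "is_cochain scale p f" "length xs = 2*p+1" "i < length xs" "xs ! i = 0"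
  shows "f xs = 0"
proof -
  have "Vector_Spaces.linear scale scale (\<lambda>v. f (xs[i := v]))"
    using assms unfolding is_cochain_def by blast
  then have "f (xs[i := 0]) = 0"
    using module_hom.zero[of scale scale "\<lambda>v. f (xs[i := v])"] by (simp add: linear_iff_module_hom)
  with assms(4) show ?thesis by (metis list_update_id)
qed

lemma sum_of_bool_lessThan:
  fixes n :: nat
  shows "(\<Sum>i<n. of_bool (P i) :: 'a::semiring_1) = of_nat (card {i. i < n \<and> P i})"
proof -
  have "(\<Sum>i<n. of_bool (P i) :: 'a) = of_nat (card ({..<n} \<inter> {i. P i}))"
    by simp
  also have "{..<n} \<inter> {i. P i} = {i. i < n \<and> P i}"
    by auto
  finally show ?thesis .
qed

lemma sum_list_eq_card_if_01:
  assumes "set ds \<subseteq> {0, 1}"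
  shows   "sum_list ds = int (card {i. i < length ds \<and> ds ! i = 1})"
proof -
  have "sum_list ds = (\<Sum>i<length ds. ds ! i)"
    by (simp add: sum_list_sum_nth atLeast0LessThan)
  also have "\<dots> = (\<Sum>i<length ds. of_bool (ds ! i = 1))"
    using assms by (intro sum.cong) (auto dest!: nth_mem)
  finally show ?thesis
    by (simp only: sum_of_bool_lessThan)
qed

lemma upt_split_pair:
  "K < n \<Longrightarrow> [2*K..<2*n+1] = [2*K, 2*K+1] @ [2*(K+1)..<2*n] @ [2*n]"
  by (simp add: upt_conv_Cons)

lemma mset_shuffle_slots:
  assumes "\<sigma> \<in> shuffles m q" "m + q \<le> n"
  shows "mset (pair_slots \<sigma> [0..<m] @ pair_slots \<sigma> [m..<m+q] @ [2*(m+q)..<2*n+1])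
           = mset [0..<2*n+1]"
proof -
  have "\<sigma> permutes {..<m+q}"
    using assms(1) by (simp add: shuffles_def)
  then have "mset (pair_slots \<sigma> [0..<m] @ pair_slots \<sigma> [m..<m+q]) = mset [0..<2*(m+q)]"
    using mset_pair_slots_permutes
    by (simp add: pair_slots_append[symmetric] upt_add_eq_append[symmetric])
  moreover have "[0..<2*n+1] = [0..<2*(m+q)] @ [2*(m+q)..<2*n+1]"
    using assms(2) upt_add_eq_append[of 0 "2*(m+q)" "2*n+1 - 2*(m+q)"] by simp
  ultimately show ?thesis
    by (metis append_assoc mset_append)
qed

lemma has_bidegree_if_weight_space:
  assumes "l + k = 2 * int p"
    and "\<And>xs w. length xs = 2*p+1 \<Longrightarrow> \<forall>i<2*p+1. xs ! i \<in> weight_space g1 g2 (w i) \<Longrightarrow>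
           F xs \<in> weight_space g1 g2 ((\<Sum>i<2*p+1. w i) - l)"
  shows "has_bidegree g1 g2 p F l k"
  unfolding has_bidegree_def
proof (intro conjI allI impI)
  fix xs t
  assume slots: "length xs = 2*p+1 \<and> (\<forall>i<length xs. xs ! i \<in> (if t i then g1 else g2))"
  define w :: "nat \<Rightarrow> int" where "w i = of_bool (t i)" for i
  have "\<forall>i<2*p+1. xs ! i \<in> weight_space g1 g2 (w i)"
    using slots by (auto simp: w_def weight_space_def)
  with slots assms(2) have "F xs \<in> weight_space g1 g2 ((\<Sum>i<2*p+1. w i) - l)"
    by blast
  moreover have "(\<Sum>i<2*p+1. w i) = int (card {i. i < 2*p+1 \<and> t i})"
    unfolding w_def by (rule sum_of_bool_lessThan)
  ultimately show "let a = int (card {i. i < 2*p+1 \<and> t i})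
      in (a = l + 1 \<longrightarrow> F xs \<in> g1) \<and> (a = l \<longrightarrow> F xs \<in> g2) \<and>
         (a \<noteq> l + 1 \<and> a \<noteq> l \<longrightarrow> F xs = 0)"
    by (auto simp: Let_def weight_space_def)
qed (use assms(1) in simp)

context
  fixes scale :: "'k::field \<Rightarrow> 'v::ab_group_add \<Rightarrow> 'v" and g1 g2 :: "'v set"
  assumes module: "module scale"
    and subspace_g1: "module.subspace scale g1" and subspace_g2: "module.subspace scale g2"
begin

lemma subspace_weight_space: "module.subspace scale (weight_space g1 g2 d)"
  using subspace_g1 subspace_g2 module.subspace_single_0[OF module] by (simp add: weight_space_def)

lemma zero_in_weight_space: "0 \<in> weight_space g1 g2 d"
  using module.subspace_0[OF module subspace_weight_space] .

lemma negpow_in_weight_space: "v \<in> weight_space g1 g2 d \<Longrightarrow> negpow n v \<in> weight_space g1 g2 d"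
  using module.subspace_neg[OF module subspace_weight_space] by (simp add: negpow_def)

lemma psign_in_weight_space: "v \<in> weight_space g1 g2 d \<Longrightarrow> psign \<sigma> v \<in> weight_space g1 g2 d"
  using module.subspace_neg[OF module subspace_weight_space] by (simp add: psign_def)

lemma has_bidegree_weight_space:
  assumes bidegree: "has_bidegree g1 g2 p f l k" and cochain: "is_cochain scale p f"
    and weights: "list_all2 (\<lambda>z d. z \<in> weight_space g1 g2 d) zs ds"
    and len: "length zs = 2*p+1"
  shows "f zs \<in> weight_space g1 g2 (sum_list ds - l)"
proof (cases "set ds \<subseteq> {0, 1}")
  case True
  define t where "t i \<longleftrightarrow> ds ! i = 1" for i
  have len_ds: "length ds = length zs"
    using weights by (rule list_all2_lengthD[symmetric])
  have "\<forall>i<length zs. zs ! i \<in> (if t i then g1 else g2)"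
  proof (intro allI impI)
    fix i assume "i < length zs"
    with weights True len_ds have "zs ! i \<in> weight_space g1 g2 (ds ! i)" "ds ! i \<in> {0, 1}"
      by (auto simp: list_all2_conv_all_nth simp del: insert_iff intro!: subsetD[OF True])
    then show "zs ! i \<in> (if t i then g1 else g2)"
      by (auto simp: t_def weight_space_def)
  qed
  moreover have "int (card {i. i < 2*p+1 \<and> t i}) = sum_list ds"
    using sum_list_eq_card_if_01[OF True] len len_ds by (simp add: t_def)
  ultimately show ?thesis
    using bidegree len unfolding has_bidegree_def weight_space_def Let_def by auto
next
  case False
  then obtain i where i: "i < length ds" "ds ! i \<notin> {0, 1}"
    by (metis in_set_conv_nth subsetI)
  with weights have "i < length zs" "zs ! i = 0"
    by (auto simp: list_all2_conv_all_nth weight_space_def)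
  with cochain len have "f zs = 0"
    by (rule cochain_eq_0_if_slot_eq_0)
  then show ?thesis
    by (simp add: zero_in_weight_space)
qed

lemma insert_cochain_weight_space:
  assumes bidegree_f: "has_bidegree g1 g2 p f lf kf" and bidegree_g: "has_bidegree g1 g2 q g lg kg"
    and cochain_f: "is_cochain scale p f" and cochain_g: "is_cochain scale q g"
    and weights: "\<forall>i<N. xs ! i \<in> weight_space g1 g2 (w i)"
    and slots: "mset (A @ B @ C) = mset [0..<N]"
    and len: "length B = 2*q+1" "length A + length C = 2*p"
  shows "f (map (nth xs) A @ [g (map (nth xs) B)] @ map (nth xs) C)
           \<in> weight_space g1 g2 ((\<Sum>i<N. w i) - (lf + lg))"
proof -
  have in_range: "set A \<subseteq> {..<N}" "set B \<subseteq> {..<N}" "set C \<subseteq> {..<N}"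
    using mset_eq_setD[OF slots] by auto
  have slot_weights: "list_all2 (\<lambda>z d. z \<in> weight_space g1 g2 d) (map (nth xs) L) (map w L)"
    if "set L \<subseteq> {..<N}" for L
    using that weights by (auto simp: list_all2_map1 list_all2_map2 list_all2_same)
  have "g (map (nth xs) B) \<in> weight_space g1 g2 (sum_list (map w B) - lg)"
    using has_bidegree_weight_space[OF bidegree_g cochain_g slot_weights[OF in_range(2)]] len by simp
  then have value_weight: "f (map (nth xs) A @ [g (map (nth xs) B)] @ map (nth xs) C)
      \<in> weight_space g1 g2 (sum_list (map w A @ [sum_list (map w B) - lg] @ map w C) - lf)"
    using slot_weights[OF in_range(1)] slot_weights[OF in_range(3)] len
    by (intro has_bidegree_weight_space[OF bidegree_f cochain_f] list_all2_appendI) auto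
  have "sum_list (map w (A @ B @ C)) = (\<Sum>i<N. w i)"
    using sum_list_map_eq_if_mset_eq[OF slots, of w] sum_set_upt_conv_sum_list_nat[of w 0 N]
    by (simp add: lessThan_atLeast0)
  then have "sum_list (map w A @ [sum_list (map w B) - lg] @ map w C) - lf = (\<Sum>i<N. w i) - (lf + lg)"
    by simp
  with value_weight show ?thesis
    by (simp only:)
qed

lemma cochain_comp_weight_space:
  assumes bidegree_f: "has_bidegree g1 g2 p f lf kf" and bidegree_g: "has_bidegree g1 g2 q g lg kg"
    and cochain_f: "is_cochain scale p f" and cochain_g: "is_cochain scale q g"
    and weights: "\<forall>i<2*(p+q)+1. xs ! i \<in> weight_space g1 g2 (w i)"
  shows "cochain_comp p q f g xs \<in> weight_space g1 g2 ((\<Sum>i<2*(p+q)+1. w i) - (lf + lg))"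
proof -
  let ?W = "weight_space g1 g2 ((\<Sum>i<2*(p+q)+1. w i) - (lf + lg))"
  note inserted = insert_cochain_weight_space[OF bidegree_f bidegree_g cochain_f cochain_g weights]
  have x_slot_terms: "f (map (nth xs) (pair_slots \<sigma> [0..<m])
        @ [g (map (nth xs) (pair_slots \<sigma> [m..<m+q]) @ [xs ! (2*(m+q))]), xs ! (2*(m+q)+1)]
        @ map (nth xs) [2*(m+q+1)..<2*(p+q)] @ [xs ! (2*(p+q))]) \<in> ?W"
    if "m < p" "\<sigma> \<in> shuffles m q" for m \<sigma>
  proof -
    have less: "m + q < p + q"
      using that(1) by simp
    have "mset (pair_slots \<sigma> [0..<m] @ (pair_slots \<sigma> [m..<m+q] @ [2*(m+q)])
        @ [2*(m+q)+1] @ [2*(m+q+1)..<2*(p+q)] @ [2*(p+q)]) = mset [0..<2*(p+q)+1]"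
      using mset_shuffle_slots[OF that(2) less_imp_le[OF less]]
      unfolding upt_split_pair[of "m+q" "p+q", OF less]
      by (simp add: ac_simps)
    from inserted[OF this] show ?thesis
      using that(1) by simp
  qed
  have y_slot_terms: "f (map (nth xs) (pair_slots \<sigma> [0..<m])
        @ [xs ! (2*(m+q)), g (map (nth xs) (pair_slots \<sigma> [m..<m+q]) @ [xs ! (2*(m+q)+1)])]
        @ map (nth xs) [2*(m+q+1)..<2*(p+q)] @ [xs ! (2*(p+q))]) \<in> ?W"
    if "m < p" "\<sigma> \<in> shuffles m q" for m \<sigma>
  proof -
    have less: "m + q < p + q"
      using that(1) by simp
    have "mset ((pair_slots \<sigma> [0..<m] @ [2*(m+q)]) @ (pair_slots \<sigma> [m..<m+q] @ [2*(m+q)+1])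
        @ [2*(m+q+1)..<2*(p+q)] @ [2*(p+q)]) = mset [0..<2*(p+q)+1]"
      using mset_shuffle_slots[OF that(2) less_imp_le[OF less]]
      unfolding upt_split_pair[of "m+q" "p+q", OF less]
      by (simp add: ac_simps)
    from inserted[OF this] show ?thesis
      using that(1) by simp
  qed
  have last_slot_terms: "f (map (nth xs) (pair_slots \<sigma> [0..<p])
        @ [g (map (nth xs) (pair_slots \<sigma> [p..<p+q]) @ [xs ! (2*(p+q))])]) \<in> ?W"
    if "\<sigma> \<in> shuffles p q" for \<sigma>
  proof -
    have "mset (pair_slots \<sigma> [0..<p] @ (pair_slots \<sigma> [p..<p+q] @ [2*(p+q)]) @ [])
        = mset [0..<2*(p+q)+1]"
      using mset_shuffle_slots[OF that order_refl] by simp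
    from inserted[OF this] show ?thesis
      by simp
  qed
  note closed = module.subspace_add[OF module subspace_weight_space]
    module.subspace_sum[OF module subspace_weight_space] negpow_in_weight_space psign_in_weight_space
  show ?thesis
    unfolding cochain_comp_def Let_def concat_map_pairs_eq_map_nth
      concat_map_pairs_eq_map_nth[where \<sigma>=id, unfolded comp_id] pair_slots_id_upt
    by (intro closed x_slot_terms y_slot_terms last_slot_terms) auto
qed

lemma cochain_bracket_weight_space:
  assumes bidegree_f: "has_bidegree g1 g2 p f lf kf" and bidegree_g: "has_bidegree g1 g2 q g lg kg"
    and cochain_f: "is_cochain scale p f" and cochain_g: "is_cochain scale q g"
    and weights: "\<forall>i<2*(p+q)+1. xs ! i \<in> weight_space g1 g2 (w i)"
  shows "cochain_bracket p q f g xs \<in> weight_space g1 g2 ((\<Sum>i<2*(p+q)+1. w i) - (lf + lg))"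
proof -
  have "cochain_comp p q f g xs \<in> weight_space g1 g2 ((\<Sum>i<2*(p+q)+1. w i) - (lf + lg))"
    using cochain_comp_weight_space[OF bidegree_f bidegree_g cochain_f cochain_g weights] .
  moreover have "cochain_comp q p g f xs \<in> weight_space g1 g2 ((\<Sum>i<2*(p+q)+1. w i) - (lf + lg))"
    using cochain_comp_weight_space[OF bidegree_g bidegree_f cochain_g cochain_f,
        unfolded add.commute[of q p] add.commute[of lg lf], OF weights] .
  ultimately show ?thesis
    unfolding cochain_bracket_def
    by (intro module.subspace_diff[OF module subspace_weight_space] negpow_in_weight_space)
qed

end

theorem lemma3p5:
  fixes scale :: "'k::field_char_0 \<Rightarrow> 'v::ab_group_add \<Rightarrow> 'v"
    and g1 g2 :: "'v set"
    and f g :: "'v list \<Rightarrow> 'v"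
    and p q :: nat and lf kf lg kg :: int
  assumes "vector_space scale"
    and "module.subspace scale g1" and "module.subspace scale g2"
    and "g1 \<inter> g2 = {0}" and "\<forall>v. \<exists>a\<in>g1. \<exists>b\<in>g2. v = a + b"
    and "is_LTS_cochain scale p f" and "is_LTS_cochain scale q g"
    and "has_bidegree g1 g2 p f lf kf" and "has_bidegree g1 g2 q g lg kg"
  shows "has_bidegree g1 g2 (p + q) (cochain_bracket p q f g) (lf + lg) (kf + kg)"
proof (rule has_bidegree_if_weight_space)
  show "lf + lg + (kf + kg) = 2 * int (p + q)"
    using assms(8,9) by (simp add: has_bidegree_def)
next
  fix xs w
  assume weights: "\<forall>i<2*(p+q)+1. xs ! i \<in> weight_space g1 g2 (w i)"
  have module: "module scale"
    using assms(1) by (simp add: module_iff_vector_space)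
  have cochains: "is_cochain scale p f" "is_cochain scale q g"
    using assms(6,7) by (simp_all add: is_LTS_cochain_def)
  from weights show "cochain_bracket p q f g xs
      \<in> weight_space g1 g2 ((\<Sum>i<2*(p+q)+1. w i) - (lf + lg))"
    by (rule cochain_bracket_weight_space[OF module assms(2,3,8,9) cochains])
qed

end
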